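(* Let $q\in\mathbb{R}$. For all $A,B\in M_2(\mathbb{C})$ with $\operatorname{tr}A=0$, $$\|AB-qBA\|_F^2\le (1+q^2)\,\|A\|_F^2\,\|B\|_F^2 .$$ The bound is sharp: for every $q$ there are $A,B\in M_2(\mathbb{C})$ with $\operatorname{tr}A=0$ and $B\neq0$ attaining equality.
   Context: $\|X\|_F=\sqrt{\operatorname{tr}(XX^\dagger)}$ denotes the Frobenius norm. *)

theory Defs
  imports "HOL-Analysis.Analysis"
begin

definition mat_trace :: "'a::comm_ring_1 ^'n::finite^'n \<Rightarrow> 'a" where
  "mat_trace A = (\<Sum>i\<in>UNIV. A $ i $ i)"

definition conj_transpose :: "complex^'n::finite^'m::finite \<Rightarrow> complex^'m^'n" where
  "conj_transpose A = (\<chi> i j. cnj (A $ j $ i))"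

text \<open>Frobenius norm: sqrt (tr (X X^dagger)); the trace is real and nonnegative.\<close>
definition frob_norm :: "complex^'n::finite^'n \<Rightarrow> real" where
  "frob_norm X = sqrt (Re (mat_trace (X ** conj_transpose X)))"

end

theory Submission
  imports Defs
begin

text \<open>
  Expand the traceless \<open>A\<close> in the Pauli basis with coefficient vector \<open>x \<in> \<complex>\<^sup>3\<close>, and write
  \<open>B\<close> through \<open>t = tr B\<close> and the (conjugated) Pauli coefficients \<open>y\<close> of its traceless part.
  Then \<open>8 ((1 + q\<^sup>2) \<parallel>A\<parallel>\<^sup>2 \<parallel>B\<parallel>\<^sup>2 - \<parallel>AB - qBA\<parallel>\<^sup>2)\<close> is the sum of squares
  \<open>\<parallel>i(1 + q) t x\<^sup>* - (1 - q) (x \<times> y)\<^sup>*\<parallel>\<^sup>2 + (1 + q)\<^sup>2 |x \<cdot> y|\<^sup>2\<close>, which gives the bound.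
  Equality holds for \<open>A = E\<^sub>1\<^sub>2\<close>, \<open>B = E\<^sub>2\<^sub>1\<close>, where \<open>t = 0\<close> and \<open>x \<cdot> y = 0\<close>.
\<close>

lemma frob_norm_sq:
  fixes X :: "complex^'n::finite^'n"
  shows "(frob_norm X)\<^sup>2 = (\<Sum>i\<in>UNIV. \<Sum>j\<in>UNIV. (cmod (X$i$j))\<^sup>2)"
proof -
  have "Re (mat_trace (X ** conj_transpose X)) = (\<Sum>i\<in>UNIV. \<Sum>j\<in>UNIV. (cmod (X$i$j))\<^sup>2)"
    by (simp add: mat_trace_def matrix_matrix_mult_def conj_transpose_def
        flip: complex_norm_square)
  moreover have "(\<Sum>i\<in>UNIV. \<Sum>j\<in>UNIV. (cmod (X$i$j))\<^sup>2) \<ge> 0"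
    by (intro sum_nonneg) simp
  ultimately show ?thesis
    by (simp add: frob_norm_def)
qed

lemma q_commutator_entry:
  fixes A B :: "'a::real_algebra_1^'n::finite^'n" and q :: real
  shows "(A ** B - q *\<^sub>R (B ** A)) $ i $ j
           = (\<Sum>k\<in>UNIV. A$i$k * B$k$j) - q *\<^sub>R (\<Sum>k\<in>UNIV. B$i$k * A$k$j)"
  by (simp add: matrix_matrix_mult_def)

lemma mat_trace_2_eq_0_iff:
  fixes A :: "'a::comm_ring_1^2^2"
  shows "mat_trace A = 0 \<longleftrightarrow> A$2$2 = - A$1$1"
  by (auto simp: mat_trace_def sum_2 eq_neg_iff_add_eq_0 add.commute)

lemma traceless_q_commutator_bound:
  fixes q :: real and a b c e f g h :: complex
  shows "(cmod (a*e + b*g - q*(e*a + f*c)))\<^sup>2 + (cmod (a*f + b*h - q*(e*b - f*a)))\<^sup>2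
         + (cmod (c*e - a*g - q*(g*a + h*c)))\<^sup>2 + (cmod (c*f - a*h - q*(g*b - h*a)))\<^sup>2
       \<le> (1 + q\<^sup>2) * (2 * (cmod a)\<^sup>2 + (cmod b)\<^sup>2 + (cmod c)\<^sup>2)
           * ((cmod e)\<^sup>2 + (cmod f)\<^sup>2 + (cmod g)\<^sup>2 + (cmod h)\<^sup>2)"
    (is "?L \<le> ?R")
proof -
  \<comment> \<open>\<open>A = [[a, b], [c, -a]]\<close>, \<open>B = [[e, f], [g, h]]\<close>; the left side is \<open>\<parallel>AB - qBA\<parallel>\<^sup>2\<close>.\<close>
  define x1 x2 x3 where "x1 = b + c" and "x2 = \<i> * (b - c)" and "x3 = 2 * a"
  define t where "t = e + h"
  define y1 y2 y3 where "y1 = cnj f + cnj g" and "y2 = - \<i> * (cnj f - cnj g)"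
    and "y3 = cnj e - cnj h"
  define z1 where "z1 = \<i> * (1 + q) * t * cnj x1 - (1 - q) * cnj (x2 * y3 - x3 * y2)"
  define z2 where "z2 = \<i> * (1 + q) * t * cnj x2 - (1 - q) * cnj (x3 * y1 - x1 * y3)"
  define z3 where "z3 = \<i> * (1 + q) * t * cnj x3 - (1 - q) * cnj (x1 * y2 - x2 * y1)"
  define v where "v = x1 * y1 + x2 * y2 + x3 * y3"
  have norm_sq: "(complex_of_real (cmod z))\<^sup>2 = z * cnj z" for z
    by (metis complex_norm_square of_real_power)
  have "complex_of_real (8 * (?R - ?L))
          = complex_of_real ((cmod z1)\<^sup>2 + (cmod z2)\<^sup>2 + (cmod z3)\<^sup>2 + (1 + q)\<^sup>2 * (cmod v)\<^sup>2)"
    unfolding of_real_mult of_real_add of_real_diff of_real_power norm_sq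
      z1_def z2_def z3_def v_def x1_def x2_def x3_def t_def y1_def y2_def y3_def
      complex_cnj_mult complex_cnj_add complex_cnj_diff complex_cnj_complex_of_real
      complex_cnj_i complex_cnj_minus complex_cnj_numeral complex_cnj_one complex_cnj_cnj
      of_real_numeral of_real_1
    using i_squared by algebra
  then have "8 * (?R - ?L) = (cmod z1)\<^sup>2 + (cmod z2)\<^sup>2 + (cmod z3)\<^sup>2 + (1 + q)\<^sup>2 * (cmod v)\<^sup>2"
    using of_real_eq_iff by blast
  moreover have "(cmod z1)\<^sup>2 + (cmod z2)\<^sup>2 + (cmod z3)\<^sup>2 + (1 + q)\<^sup>2 * (cmod v)\<^sup>2 \<ge> 0"
    by simp
  ultimately have "0 \<le> 8 * (?R - ?L)"
    by simp
  then show ?thesis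
    by simp
qed

lemma frob_norm_q_commutator_le:
  fixes A B :: "complex^2^2" and q :: real
  assumes "mat_trace A = 0"
  shows "(frob_norm (A ** B - q *\<^sub>R (B ** A)))\<^sup>2 \<le> (1 + q\<^sup>2) * (frob_norm A)\<^sup>2 * (frob_norm B)\<^sup>2"
proof -
  have A22: "A$2$2 = - A$1$1"
    using assms by (simp add: mat_trace_2_eq_0_iff)
  have frob_norm_sq_A:
    "(frob_norm A)\<^sup>2 = 2 * (cmod (A$1$1))\<^sup>2 + (cmod (A$1$2))\<^sup>2 + (cmod (A$2$1))\<^sup>2"
    by (simp add: frob_norm_sq sum_2 A22)
  let ?X = "A ** B - q *\<^sub>R (B ** A)"
  have entries:
    "?X$1$1 = A$1$1*B$1$1 + A$1$2*B$2$1 - q*(B$1$1*A$1$1 + B$1$2*A$2$1)"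
    "?X$1$2 = A$1$1*B$1$2 + A$1$2*B$2$2 - q*(B$1$1*A$1$2 - B$1$2*A$1$1)"
    "?X$2$1 = A$2$1*B$1$1 - A$1$1*B$2$1 - q*(B$2$1*A$1$1 + B$2$2*A$2$1)"
    "?X$2$2 = A$2$1*B$1$2 - A$1$1*B$2$2 - q*(B$2$1*A$1$2 - B$2$2*A$1$1)"
    unfolding q_commutator_entry by (simp_all add: sum_2 scaleR_conv_of_real A22)
  show ?thesis
    using traceless_q_commutator_bound[where a = "A$1$1" and b = "A$1$2" and c = "A$2$1"
        and e = "B$1$1" and f = "B$1$2" and g = "B$2$1" and h = "B$2$2"]
    unfolding frob_norm_sq[of ?X] frob_norm_sq[of B] frob_norm_sq_A sum_2 entries
    by (simp only: add.assoc)
qed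

lemma frob_norm_q_commutator_E12_E21:
  fixes q :: real
  defines "A \<equiv> (\<chi> i j. if i = 1 \<and> j = 2 then 1 else 0) :: complex^2^2"
    and "B \<equiv> (\<chi> i j. if i = 2 \<and> j = 1 then 1 else 0) :: complex^2^2"
  shows "mat_trace A = 0" and "B \<noteq> 0"
    and "(frob_norm (A ** B - q *\<^sub>R (B ** A)))\<^sup>2 = (1 + q\<^sup>2) * (frob_norm A)\<^sup>2 * (frob_norm B)\<^sup>2"
proof -
  show "mat_trace A = 0"
    by (simp add: A_def mat_trace_def sum_2)
  have "B$2$1 \<noteq> 0"
    by (simp add: B_def)
  then show "B \<noteq> 0"
    by auto
  show "(frob_norm (A ** B - q *\<^sub>R (B ** A)))\<^sup>2 = (1 + q\<^sup>2) * (frob_norm A)\<^sup>2 * (frob_norm B)\<^sup>2"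
    unfolding frob_norm_sq q_commutator_entry
    by (simp add: sum_2 scaleR_conv_of_real A_def B_def)
qed

theorem proposition3:
  fixes q :: real
  shows "(\<forall>A B :: complex^2^2. mat_trace A = 0 \<longrightarrow>
            (frob_norm (A ** B - q *\<^sub>R (B ** A)))\<^sup>2
              \<le> (1 + q\<^sup>2) * (frob_norm A)\<^sup>2 * (frob_norm B)\<^sup>2)
       \<and> (\<exists>A B :: complex^2^2. mat_trace A = 0 \<and> B \<noteq> 0 \<and>
            (frob_norm (A ** B - q *\<^sub>R (B ** A)))\<^sup>2
              = (1 + q\<^sup>2) * (frob_norm A)\<^sup>2 * (frob_norm B)\<^sup>2)"
  using frob_norm_q_commutator_le frob_norm_q_commutator_E12_E21 by blast

end
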